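(* Let $I$ be a non-empty set, let $\overline{D}=\{z\in\mathbb{C}:|z|\le1\}$, and equip $\overline{D}^I$ with the product topology. Let $f:\overline{D}^I\to\mathbb{C}$ be a function. Then there exists a sequence $(p_n)_{n\ge1}$ of polynomials on $\overline{D}^I$ converging uniformly to $f$ on $\overline{D}^I$ (with respect to the usual Euclidean metric of $\mathbb{C}$) if and only if both of the following hold: (a) $f$ is continuous on $\overline{D}^I$; (b) for every $i_0\in I$ and every $z=(z_i)_{i\in I}\in\overline{D}^I$, the function $\overline{D}\ni w\mapsto f(\zeta(w))\in\mathbb{C}$ belongs to $A(\overline{D})$, where $\zeta(w)_{i_0}=w$ and $\zeta(w)_i=z_i$ for all $i\in I\setminus\{i_0\}$.
   Context: A polynomial on $\overline{D}^I$ is a finite sum of monomials $c\, z_{i_1}^{k_1}\cdots z_{i_M}^{k_M}$ with $c\in\mathbb{C}$, $M\in\mathbb{N}$, $i_1,\dots,i_M\in I$, $k_1,\dots,k_M\in\mathbb{N}$, evaluated at $z=(z_i)_{i\in I}\in\overline{D}^I$; thus each polynomial depends on only finitely many coordinates. $A(\overline{D})$ denotes the disc algebra: functions $\overline{D}\to\mathbb{C}$ continuous on $\overline{D}$ and holomorphic in the open unit disc $D$. *)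

theory Defs
  imports "HOL-Complex_Analysis.Complex_Analysis"
begin

text \<open>The closed polydisc: points z = (z_i) indexed by the type 'i (the index set I,
  automatically non-empty), with every coordinate in the closed unit disc.
  Functions 'i => complex carry the product topology (Function_Topology).\<close>
definition polydisc :: "('i \<Rightarrow> complex) set" where
  "polydisc = {z. \<forall>i. z i \<in> cball 0 1}"

definition monomial_fun :: "complex \<Rightarrow> ('i \<times> nat) list \<Rightarrow> ('i \<Rightarrow> complex) \<Rightarrow> complex" where
  "monomial_fun c xs = (\<lambda>z. c * prod_list (map (\<lambda>(i,k). z i ^ k) xs))"

definition poly_funs :: "(('i \<Rightarrow> complex) \<Rightarrow> complex) set" where
  "poly_funs = {p. \<exists>ms :: (complex \<times> ('i \<times> nat) list) list.
      p = (\<lambda>z. sum_list (map (\<lambda>(c, xs). monomial_fun c xs z) ms))}"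

definition disc_algebra :: "(complex \<Rightarrow> complex) set" where
  "disc_algebra = {g. continuous_on (cball 0 1) g \<and> g holomorphic_on ball 0 1}"

end

theory Submission
  imports Defs
begin

text \<open>Uniform limits of polynomials are continuous and holomorphic in each variable, which gives
  necessity. For sufficiency, uniform continuity of \<open>f\<close> on the compact polydisc (in the product
  topology) makes \<open>f\<close> uniformly close to \<open>f \<circ> \<Phi>\<close>, where \<open>\<Phi>\<close> multiplies the coordinates in a
  finite set \<open>F\<close> by some \<open>r < 1\<close> and sets all others to \<open>0\<close>. Then \<open>G = f \<circ> \<Phi>\<close> depends only on the
  coordinates in \<open>F\<close>, and all its slices are holomorphic and bounded on the disc of radius \<open>1/r\<close>.
  Such a \<open>G\<close> is approximated by induction on \<open>F\<close>: in one coordinate \<open>z\<^sub>i\<close>, interpolating the slice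
  at the \<open>K\<close>-th roots of unity makes an error of order \<open>s\<^sup>-\<^sup>K\<close> on the closed disc (Cauchy estimates
  and aliasing of the Taylor series), and the interpolation coefficients are averages of \<open>G\<close>
  that no longer depend on \<open>z\<^sub>i\<close> but keep the slice bounds.\<close>

section \<open>Interpolation at roots of unity\<close>

definition root_of_unity :: "nat \<Rightarrow> complex" where
  "root_of_unity K = exp (2 * of_real pi * \<i> / of_nat K)"

lemma root_of_unity_power:
  "root_of_unity K ^ j = exp (2 * of_real pi * \<i> * of_nat j / of_nat K)"
  unfolding root_of_unity_def by (simp add: exp_of_nat_mult[symmetric] mult_ac)

lemma norm_root_of_unity_power [simp]: "norm (root_of_unity K ^ j) = 1"
  unfolding root_of_unity_power by (simp add: norm_exp_eq_Re)

lemma norm_root_of_unity [simp]: "norm (root_of_unity K) = 1"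
  using norm_root_of_unity_power[of K 1] by simp

lemma sum_root_of_unity_powers:
  assumes "K > 0"
  shows "(\<Sum>k<K. (root_of_unity K ^ j) ^ k) = (if K dvd j then of_nat K else 0)"
proof -
  have "root_of_unity K ^ j = 1 \<longleftrightarrow> K dvd j"
    using complex_root_unity_eq_1[of K j] assms by (simp add: root_of_unity_power)
  moreover have "(root_of_unity K ^ j) ^ K = 1"
    using complex_root_unity[of K j] assms by (simp add: root_of_unity_power)
  ultimately show ?thesis
    by (auto simp: sum_gp_strict)
qed

lemma dvd_add_diff_iff_mod_eq:
  fixes n m K :: nat
  assumes "m < K"
  shows "K dvd n + K - m \<longleftrightarrow> n mod K = m"
  using assms by (metis le_add2 le_trans less_or_eq_imp_le mod_add_self2 mod_eq_dvd_iff_nat mod_nat_eqI)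

text \<open>The coefficients of the polynomial of degree \<open>< K\<close> interpolating \<open>h\<close> at the \<open>K\<close>-th roots
  of unity; the factor \<open>(\<omega>\<^sup>k)\<^sup>K\<^sup>-\<^sup>m\<close> stands for \<open>\<omega>\<^sup>-\<^sup>k\<^sup>m\<close>.\<close>

definition dft_coeff :: "nat \<Rightarrow> (complex \<Rightarrow> complex) \<Rightarrow> nat \<Rightarrow> complex" where
  "dft_coeff K h m =
     (\<Sum>k<K. h (root_of_unity K ^ k) * (root_of_unity K ^ k) ^ (K - m)) / of_nat K"

lemma dft_coeff_power:
  assumes "K > 0" "m < K"
  shows "dft_coeff K (\<lambda>w. w ^ n) m = (if n mod K = m then 1 else 0)"
proof -
  define \<omega> where "\<omega> = root_of_unity K"
  have "(\<omega> ^ k) ^ n * (\<omega> ^ k) ^ (K - m) = (\<omega> ^ (n + K - m)) ^ k" for k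
  proof -
    have "n + K - m = n + (K - m)"
      using assms by simp
    then have "k * n + k * (K - m) = k * (n + K - m)"
      by (simp add: distrib_left)
    then show ?thesis by (simp add: power_add[symmetric] power_mult[symmetric] mult.commute)
  qed
  then have "dft_coeff K (\<lambda>w. w ^ n) m = (\<Sum>k<K. (\<omega> ^ (n + K - m)) ^ k) / of_nat K"
    by (simp add: dft_coeff_def \<omega>_def)
  then show ?thesis
    using assms sum_root_of_unity_powers[of K "n + K - m"]
    by (simp add: \<omega>_def dvd_add_diff_iff_mod_eq)
qed

lemma dft_interpolant_power:
  assumes "K > 0"
  shows "(\<Sum>m<K. dft_coeff K (\<lambda>w. w ^ n) m * z ^ m) = z ^ (n mod K)"
proof -
  have "(\<Sum>m<K. dft_coeff K (\<lambda>w. w ^ n) m * z ^ m) = (\<Sum>m<K. if m = n mod K then z ^ m else 0)"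
    using assms by (intro sum.cong) (auto simp: dft_coeff_power)
  then show ?thesis
    using assms by simp
qed

lemma dft_coeff_sums:
  assumes "\<And>w. norm w = 1 \<Longrightarrow> (\<lambda>n. a n * w ^ n) sums h w"
  shows "(\<lambda>n. a n * dft_coeff K (\<lambda>w. w ^ n) m) sums dft_coeff K h m"
proof -
  have "(\<lambda>n. a n * (root_of_unity K ^ k) ^ n * (root_of_unity K ^ k) ^ (K - m)) sums
          (h (root_of_unity K ^ k) * (root_of_unity K ^ k) ^ (K - m))" for k
    by (intro sums_mult2 assms) simp
  then have "(\<lambda>n. (\<Sum>k<K. a n * (root_of_unity K ^ k) ^ n * (root_of_unity K ^ k) ^ (K - m)) / of_nat K)
               sums dft_coeff K h m"
    unfolding dft_coeff_def by (intro sums_divide sums_sum)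
  then show ?thesis
    by (simp add: dft_coeff_def sum_distrib_left mult.assoc)
qed

lemma norm_dft_coeff_le:
  assumes "K > 0" "\<And>k. k < K \<Longrightarrow> norm (h (root_of_unity K ^ k)) \<le> M"
  shows "norm (dft_coeff K h m) \<le> M"
proof -
  have "norm (\<Sum>k<K. h (root_of_unity K ^ k) * (root_of_unity K ^ k) ^ (K - m)) \<le> (\<Sum>k<K. M)"
    using assms(2) by (intro sum_norm_le) (simp add: norm_mult norm_power)
  then show ?thesis
    using assms(1) by (simp add: dft_coeff_def norm_divide field_simps)
qed

lemma dft_interpolant_sums_aliased:
  assumes "\<And>w. norm w = 1 \<Longrightarrow> (\<lambda>n. a n * w ^ n) sums h w" "K > 0"
  shows "(\<lambda>n. a n * z ^ (n mod K)) sums (\<Sum>m<K. dft_coeff K h m * z ^ m)"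
proof -
  have "(\<lambda>n. \<Sum>m<K. a n * dft_coeff K (\<lambda>w. w ^ n) m * z ^ m) sums (\<Sum>m<K. dft_coeff K h m * z ^ m)"
    by (intro sums_sum sums_mult2 dft_coeff_sums assms(1))
  then show ?thesis
    using dft_interpolant_power[OF assms(2)] by (simp add: mult.assoc sum_distrib_left[symmetric])
qed

lemma norm_taylor_coeff_le:
  fixes h :: "complex \<Rightarrow> complex"
  assumes hol: "h holomorphic_on ball 0 R" and s: "0 < s" "s < R"
    and bound: "\<And>w. w \<in> ball 0 R \<Longrightarrow> norm (h w) \<le> M"
  shows "norm ((deriv ^^ n) h 0 / fact n) \<le> M / s ^ n"
proof -
  have "norm ((deriv ^^ n) h 0) \<le> fact n * M / s ^ n"
  proof (rule Cauchy_inequality)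
    show "h holomorphic_on ball 0 s"
      using hol s by (auto elim: holomorphic_on_subset)
    show "continuous_on (cball 0 s) h"
      using s by (intro holomorphic_on_imp_continuous_on holomorphic_on_subset[OF hol]) auto
  qed (use s bound in auto)
  then show ?thesis
    by (simp add: norm_divide field_simps)
qed

lemma norm_sub_dft_interpolant_le:
  fixes h :: "complex \<Rightarrow> complex"
  assumes hol: "h holomorphic_on ball 0 R" and s: "1 < s" "s < R"
    and bound: "\<And>w. w \<in> ball 0 R \<Longrightarrow> norm (h w) \<le> M" and K: "K > 0" and z: "norm z \<le> 1"
  shows "norm (h z - (\<Sum>m<K. dft_coeff K h m * z ^ m)) \<le> 2 * M * (1/s) ^ K / (1 - 1/s)"
proof -
  define a where "a n = (deriv ^^ n) h 0 / fact n" for n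
  define q where "q = 1/s"
  have q: "0 < q" "q < 1"
    using s by (auto simp: q_def)
  have M: "0 \<le> M"
    using bound[of 0] s by (auto intro: order_trans[OF norm_ge_zero])
  have a: "norm (a n) \<le> M * q ^ n" for n
    using norm_taylor_coeff_le[OF hol _ s(2) bound, of n] s
    by (simp add: a_def q_def power_one_over)
  have taylor: "(\<lambda>n. a n * w ^ n) sums h w" if "norm w < R" for w
    using holomorphic_power_series[OF hol, of w] that by (simp add: a_def)
  have "(\<lambda>n. a n * z ^ (n mod K)) sums (\<Sum>m<K. dft_coeff K h m * z ^ m)"
    by (rule dft_interpolant_sums_aliased[OF _ K]) (use s taylor in auto)
  then have diff: "(\<lambda>n. a n * (z ^ n - z ^ (n mod K))) sums (h z - (\<Sum>m<K. dft_coeff K h m * z ^ m))"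
    using sums_diff[OF taylor] z s by (simp add: right_diff_distrib)
  define g where "g n = (if n < K then 0 else 2 * M * q ^ n)" for n
  have diff_le: "norm (a n * (z ^ n - z ^ (n mod K))) \<le> g n" for n
  proof (cases "n < K")
    case False
    have "norm (z ^ n - z ^ (n mod K)) \<le> norm (z ^ n) + norm (z ^ (n mod K))"
      by (rule norm_triangle_ineq4)
    also have "\<dots> \<le> 2"
      using power_le_one[of "norm z" n] power_le_one[of "norm z" "n mod K"] z
      by (simp add: norm_power)
    finally have "norm (a n) * norm (z ^ n - z ^ (n mod K)) \<le> M * q ^ n * 2"
      using a M q by (intro mult_mono) auto
    then show ?thesis
      using False by (simp add: g_def norm_mult)
  qed (simp add: g_def)
  have "(\<lambda>n. g (n + K)) sums (2 * M * q ^ K / (1 - q))"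
    using sums_mult[OF geometric_sums[of q], of "2 * M * q ^ K"] q
    by (simp add: g_def power_add mult_ac)
  moreover have "(\<Sum>n<K. g n) = 0"
    by (simp add: g_def)
  ultimately have g: "g sums (2 * M * q ^ K / (1 - q))"
    using sums_iff_shift[of g K] by simp
  show ?thesis
    using norm_sums_le[OF diff g diff_le] by (simp add: q_def)
qed

section \<open>Polynomials on the polydisc\<close>

lemma polydisc_fun_upd: "z \<in> polydisc \<Longrightarrow> norm w \<le> 1 \<Longrightarrow> z(i := w) \<in> polydisc"
  by (simp add: polydisc_def)

lemma norm_polydisc_le: "z \<in> polydisc \<Longrightarrow> norm (z i) \<le> 1"
  by (simp add: polydisc_def)

lemma poly_funs_const: "(\<lambda>z. c) \<in> poly_funs"
  unfolding poly_funs_def by (intro CollectI exI[of _ "[(c, [])]"]) (simp add: monomial_fun_def)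

lemma poly_funs_add:
  assumes "p \<in> poly_funs" "q \<in> poly_funs"
  shows "(\<lambda>z. p z + q z) \<in> poly_funs"
proof -
  obtain ms ms' where "p = (\<lambda>z. sum_list (map (\<lambda>(c, xs). monomial_fun c xs z) ms))"
    "q = (\<lambda>z. sum_list (map (\<lambda>(c, xs). monomial_fun c xs z) ms'))"
    using assms unfolding poly_funs_def by blast
  then show ?thesis
    unfolding poly_funs_def by (intro CollectI exI[of _ "ms @ ms'"]) simp
qed

lemma poly_funs_mult_coordinate_power:
  assumes "p \<in> poly_funs"
  shows "(\<lambda>z. p z * z i ^ k) \<in> poly_funs"
proof -
  obtain ms where p: "p = (\<lambda>z. sum_list (map (\<lambda>(c, xs). monomial_fun c xs z) ms))"
    using assms unfolding poly_funs_def by blast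
  define ms' where "ms' = map (\<lambda>(c, xs). (c, (i, k) # xs)) ms"
  have "p z * z i ^ k = sum_list (map (\<lambda>(c, xs). monomial_fun c xs z) ms')" for z
    unfolding p ms'_def by (induction ms) (auto simp: monomial_fun_def algebra_simps)
  then show ?thesis
    unfolding poly_funs_def by blast
qed

lemma poly_funs_sum_coordinate_powers:
  assumes "\<And>m. m < K \<Longrightarrow> p m \<in> poly_funs"
  shows "(\<lambda>z. \<Sum>m<K. p m z * z i ^ m) \<in> poly_funs"
  using assms
proof (induction K)
  case 0
  then show ?case
    using poly_funs_const[of 0] by simp
next
  case (Suc K)
  then have "(\<lambda>z. (\<Sum>m<K. p m z * z i ^ m) + p K z * z i ^ K) \<in> poly_funs"
    by (intro poly_funs_add poly_funs_mult_coordinate_power) auto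
  then show ?case
    by simp
qed

lemma continuous_on_monomial_fun:
  fixes xs :: "('i \<times> nat) list"
  shows "continuous_on UNIV (monomial_fun c xs)"
proof -
  have "continuous_on UNIV (\<lambda>z::'i \<Rightarrow> complex. prod_list (map (\<lambda>(i, k). z i ^ k) xs))"
    by (induction xs) (auto intro!: continuous_intros continuous_on_product_coordinates)
  then show ?thesis
    unfolding monomial_fun_def by (intro continuous_intros)
qed

lemma continuous_on_poly_funs:
  assumes "p \<in> poly_funs"
  shows "continuous_on UNIV p"
proof -
  obtain ms where p: "p = (\<lambda>z. sum_list (map (\<lambda>(c, xs). monomial_fun c xs z) ms))"
    using assms unfolding poly_funs_def by blast
  show ?thesis
    unfolding p by (induction ms) (auto intro!: continuous_intros continuous_on_monomial_fun)
qed

lemma holomorphic_monomial_fun_slice: "(\<lambda>w. monomial_fun c xs (z(i := w))) holomorphic_on UNIV"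
proof -
  have coordinate: "(\<lambda>w. if j = i then w else z j) holomorphic_on UNIV" for j
    by (cases "j = i") auto
  have "(\<lambda>w. prod_list (map (\<lambda>(j, k). (z(i := w)) j ^ k) xs)) holomorphic_on UNIV"
    by (induction xs) (auto intro!: holomorphic_intros coordinate)
  then show ?thesis
    unfolding monomial_fun_def by (intro holomorphic_intros)
qed

lemma holomorphic_poly_funs_slice:
  assumes "p \<in> poly_funs"
  shows "(\<lambda>w. p (z(i := w))) holomorphic_on UNIV"
proof -
  obtain ms where p: "p = (\<lambda>z. sum_list (map (\<lambda>(c, xs). monomial_fun c xs z) ms))"
    using assms unfolding poly_funs_def by blast
  show ?thesis
    unfolding p by (induction ms) (auto intro!: holomorphic_intros holomorphic_monomial_fun_slice[unfolded fun_upd_def])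
qed

section \<open>Functions of finitely many coordinates\<close>

definition depends_only_on :: "'i set \<Rightarrow> (('i \<Rightarrow> 'a) \<Rightarrow> 'b) \<Rightarrow> bool" where
  "depends_only_on F G \<longleftrightarrow> (\<forall>z z'. (\<forall>i\<in>F. z i = z' i) \<longrightarrow> G z = G z')"

definition slices_holomorphic_bounded ::
    "'i set \<Rightarrow> real \<Rightarrow> real \<Rightarrow> (('i \<Rightarrow> complex) \<Rightarrow> complex) \<Rightarrow> bool" where
  "slices_holomorphic_bounded F R M G \<longleftrightarrow>
     (\<forall>i\<in>F. \<forall>z\<in>polydisc. (\<lambda>w. G (z(i := w))) holomorphic_on ball 0 R \<and>
        (\<forall>w\<in>ball 0 R. norm (G (z(i := w))) \<le> M))"

lemma depends_only_on_dft_coeff: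
  fixes G :: "('i \<Rightarrow> complex) \<Rightarrow> complex"
  assumes "depends_only_on (insert i F) G"
  shows "depends_only_on F (\<lambda>z. dft_coeff K (\<lambda>w. G (z(i := w))) m)"
  unfolding depends_only_on_def
proof (intro allI impI)
  fix z z' :: "'i \<Rightarrow> complex" assume "\<forall>j\<in>F. z j = z' j"
  then have "G (z(i := w)) = G (z'(i := w))" for w
    using assms unfolding depends_only_on_def by auto
  then show "dft_coeff K (\<lambda>w. G (z(i := w))) m = dft_coeff K (\<lambda>w. G (z'(i := w))) m"
    by simp
qed

lemma slices_holomorphic_bounded_dft_coeff:
  fixes G :: "('i \<Rightarrow> complex) \<Rightarrow> complex"
  assumes G: "slices_holomorphic_bounded (insert i F) R M G" and "i \<notin> F" "K > 0"
  shows "slices_holomorphic_bounded F R M (\<lambda>z. dft_coeff K (\<lambda>w. G (z(i := w))) m)"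
  unfolding slices_holomorphic_bounded_def
proof (intro ballI conjI)
  fix j and z :: "'i \<Rightarrow> complex" assume j: "j \<in> F" and z: "z \<in> polydisc"
  have "j \<noteq> i"
    using j \<open>i \<notin> F\<close> by auto
  then have swap: "(z(j := w))(i := u) = (z(i := u))(j := w)" for w u
    by (rule fun_upd_twist)
  have on_polydisc: "z(i := root_of_unity K ^ k) \<in> polydisc" for k
    using z by (intro polydisc_fun_upd) auto
  show "(\<lambda>w. dft_coeff K (\<lambda>u. G ((z(j := w))(i := u))) m) holomorphic_on ball 0 R"
    using G j on_polydisc
    unfolding swap dft_coeff_def slices_holomorphic_bounded_def by (intro holomorphic_intros) auto
  fix w :: complex assume "w \<in> ball 0 R"
  then show "norm (dft_coeff K (\<lambda>u. G ((z(j := w))(i := u))) m) \<le> M"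
    using G j on_polydisc \<open>K > 0\<close>
    unfolding swap slices_holomorphic_bounded_def by (intro norm_dft_coeff_le) auto
qed

lemma poly_funs_approx_coordinate_expansion:
  fixes G :: "('i \<Rightarrow> complex) \<Rightarrow> complex"
  assumes expansion: "\<And>z. z \<in> polydisc \<Longrightarrow> norm (G z - (\<Sum>m<K. c m z * z i ^ m)) \<le> \<eta>"
    and coeffs: "\<And>m. \<exists>p\<in>poly_funs. \<forall>z\<in>polydisc. norm (c m z - p z) < \<delta>"
    and "\<eta> + K * \<delta> < \<epsilon>"
  shows "\<exists>p\<in>poly_funs. \<forall>z\<in>polydisc. norm (G z - p z) < \<epsilon>"
proof -
  obtain p where p: "\<And>m. p m \<in> poly_funs"
    and p_approx: "\<And>m z. z \<in> polydisc \<Longrightarrow> norm (c m z - p m z) < \<delta>"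
    using coeffs by metis
  have approx: "norm (G z - (\<Sum>m<K. p m z * z i ^ m)) < \<epsilon>" if z: "z \<in> polydisc" for z
  proof -
    have "0 \<le> \<delta>"
      using norm_ge_zero[of "c 0 z - p 0 z"] p_approx[OF z, of 0] by linarith
    have "norm (\<Sum>m<K. (c m z - p m z) * z i ^ m) \<le> (\<Sum>m<K. \<delta>)"
    proof (intro sum_norm_le)
      fix m
      have "norm (c m z - p m z) * norm (z i) ^ m \<le> \<delta> * 1"
        using p_approx[OF z, of m] norm_polydisc_le[OF z, of i] \<open>0 \<le> \<delta>\<close>
        by (intro mult_mono power_le_one) auto
      then show "norm ((c m z - p m z) * z i ^ m) \<le> \<delta>"
        by (simp add: norm_mult norm_power)
    qed
    moreover have split: "G z - (\<Sum>m<K. p m z * z i ^ m) =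
        (G z - (\<Sum>m<K. c m z * z i ^ m)) + (\<Sum>m<K. (c m z - p m z) * z i ^ m)"
      by (simp add: left_diff_distrib sum_subtractf)
    ultimately show ?thesis
      unfolding split
      using norm_triangle_ineq[of "G z - (\<Sum>m<K. c m z * z i ^ m)" "\<Sum>m<K. (c m z - p m z) * z i ^ m"]
        expansion[OF z] assms(3) by simp
  qed
  show ?thesis
  proof (rule bexI[of _ "\<lambda>z. \<Sum>m<K. p m z * z i ^ m"])
    show "(\<lambda>z. \<Sum>m<K. p m z * z i ^ m) \<in> poly_funs"
      using p by (intro poly_funs_sum_coordinate_powers)
  qed (use approx in simp)
qed

lemma finitely_dependent_approximable_by_poly_funs:
  fixes G :: "('i \<Rightarrow> complex) \<Rightarrow> complex"
  assumes "finite F" "1 < R" "depends_only_on F G" "slices_holomorphic_bounded F R M G" "\<epsilon> > 0"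
  shows "\<exists>p\<in>poly_funs. \<forall>z\<in>polydisc. norm (G z - p z) < \<epsilon>"
  using assms(1,3-5)
proof (induction F arbitrary: G \<epsilon> rule: finite_induct)
  case empty
  then have "G z = G undefined" for z
    by (simp add: depends_only_on_def)
  then have "\<forall>z\<in>polydisc. norm (G z - G undefined) < \<epsilon>"
    using \<open>\<epsilon> > 0\<close> by (metis diff_self norm_zero)
  then show ?case
    using poly_funs_const[of "G undefined"] by (intro bexI[of _ "\<lambda>z. G undefined"]) auto
next
  case (insert i F)
  define s where "s = (1 + R) / 2"
  have s: "1 < s" "s < R"
    using \<open>1 < R\<close> by (auto simp: s_def)
  have "(\<lambda>K. 2 * M * (1/s) ^ K / (1 - 1/s)) \<longlonglongrightarrow> 2 * M * 0 / (1 - 1/s)"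
    using s by (intro tendsto_intros LIMSEQ_power_zero) auto
  then have "eventually (\<lambda>K. 2 * M * (1/s) ^ K / (1 - 1/s) < \<epsilon>/2) sequentially"
    using \<open>\<epsilon> > 0\<close> by (intro order_tendstoD) auto
  then obtain K where K: "K > 0" "2 * M * (1/s) ^ K / (1 - 1/s) < \<epsilon>/2"
    unfolding eventually_sequentially by (metis le_add2 add_gr_0 zero_less_one)
  show ?case
  proof (rule poly_funs_approx_coordinate_expansion[where c = "\<lambda>m z. dft_coeff K (\<lambda>w. G (z(i := w))) m"
        and \<eta> = "2 * M * (1/s) ^ K / (1 - 1/s)" and \<delta> = "\<epsilon> / (2 * K)"])
    fix z :: "'i \<Rightarrow> complex" assume z: "z \<in> polydisc"
    have slice: "(\<lambda>w. G (z(i := w))) holomorphic_on ball 0 R"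
      "\<And>w. w \<in> ball 0 R \<Longrightarrow> norm (G (z(i := w))) \<le> M"
      using insert.prems(2) z unfolding slices_holomorphic_bounded_def by auto
    show "norm (G z - (\<Sum>m<K. dft_coeff K (\<lambda>w. G (z(i := w))) m * z i ^ m)) \<le> 2 * M * (1/s) ^ K / (1 - 1/s)"
      using norm_sub_dft_interpolant_le[OF slice(1) s slice(2) K(1) norm_polydisc_le[OF z, of i]] by simp
  next
    fix m
    show "\<exists>p\<in>poly_funs. \<forall>z\<in>polydisc. norm (dft_coeff K (\<lambda>w. G (z(i := w))) m - p z) < \<epsilon> / (2 * K)"
      using insert K \<open>\<epsilon> > 0\<close>
      by (intro insert.IH depends_only_on_dft_coeff slices_holomorphic_bounded_dft_coeff) auto
  next
    show "2 * M * (1/s) ^ K / (1 - 1/s) + K * (\<epsilon> / (2 * K)) < \<epsilon>"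
      using K by simp
  qed
qed

section \<open>Continuity in the product topology\<close>

lemma continuous_on_finitely_many_coordinates:
  fixes f :: "('i \<Rightarrow> 'a::metric_space) \<Rightarrow> 'b::metric_space"
  assumes "continuous_on S f" "x \<in> S" "\<epsilon> > 0"
  obtains F \<delta> where "finite F" "\<delta> > 0"
    "\<And>y. y \<in> S \<Longrightarrow> (\<forall>i\<in>F. dist (y i) (x i) < \<delta>) \<Longrightarrow> dist (f y) (f x) < \<epsilon>"
proof -
  obtain A where A: "open A" "A \<inter> S = f -` ball (f x) \<epsilon> \<inter> S"
    using assms(1) unfolding continuous_on_open_invariant by (meson open_ball)
  have "openin (product_topology (\<lambda>i. euclidean) UNIV) A"
    using A(1) by (simp add: open_fun_def)
  moreover have "x \<in> A"
    using A(2) assms(2,3) by auto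
  ultimately have "\<exists>X. x \<in> PiE UNIV X \<and> (\<forall>i. open (X i)) \<and> finite {i. X i \<noteq> UNIV} \<and> PiE UNIV X \<subseteq> A"
    using product_topology_open_contains_basis[of "\<lambda>i. euclidean" UNIV A x] by simp
  then obtain X where X: "x \<in> PiE UNIV X" "\<And>i. open (X i)"
      "finite {i. X i \<noteq> UNIV}" "PiE UNIV X \<subseteq> A"
    by auto
  define F where "F = {i. X i \<noteq> UNIV}"
  have "\<exists>e>0. ball (x i) e \<subseteq> X i" for i
    using X(1) open_contains_ball[of "X i"] X(2)[of i] by (auto simp: PiE_iff)
  then obtain e where e: "\<And>i. e i > 0" "\<And>i. ball (x i) (e i) \<subseteq> X i"
    by metis
  define \<delta> where "\<delta> = Min (insert 1 (e ` F))"
  show thesis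
  proof
    show "finite F" "\<delta> > 0"
      using X(3) e(1) by (simp_all add: F_def \<delta>_def)
    fix y assume y: "y \<in> S" and close: "\<forall>i\<in>F. dist (y i) (x i) < \<delta>"
    have "y i \<in> X i" for i
    proof (cases "i \<in> F")
      case True
      then have "\<delta> \<le> e i"
        using X(3) by (simp add: F_def \<delta>_def)
      then have "y i \<in> ball (x i) (e i)"
        using close True by (auto simp: dist_commute)
      then show ?thesis
        using e(2) by blast
    qed (simp add: F_def)
    then have "y \<in> A \<inter> S"
      using X(4) y by (auto simp: PiE_iff)
    then show "dist (f y) (f x) < \<epsilon>"
      using A(2) by (auto simp: dist_commute)
  qed
qed

lemma compact_uniformly_continuous_finitely_many_coordinates:
  fixes f :: "('i \<Rightarrow> 'a::metric_space) \<Rightarrow> 'b::metric_space"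
  assumes "compact S" "continuous_on S f" "\<epsilon> > 0"
  obtains F \<delta> where "finite F" "\<delta> > 0"
    "\<And>y z. y \<in> S \<Longrightarrow> z \<in> S \<Longrightarrow> (\<forall>i\<in>F. dist (y i) (z i) < \<delta>) \<Longrightarrow> dist (f y) (f z) < \<epsilon>"
proof -
  have "\<exists>F \<delta>. finite F \<and> \<delta> > 0 \<and>
      (\<forall>y\<in>S. (\<forall>i\<in>F. dist (y i) (x i) < \<delta>) \<longrightarrow> dist (f y) (f x) < \<epsilon>/2)" if x: "x \<in> S" for x
  proof -
    obtain F \<delta> where "finite F" "\<delta> > 0"
      "\<And>y. y \<in> S \<Longrightarrow> (\<forall>i\<in>F. dist (y i) (x i) < \<delta>) \<Longrightarrow> dist (f y) (f x) < \<epsilon>/2"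
      by (rule continuous_on_finitely_many_coordinates[OF assms(2) x, of "\<epsilon>/2"]) (use assms(3) in auto)
    then show ?thesis
      by blast
  qed
  then obtain Fx \<delta>x where Fx: "\<And>x. x \<in> S \<Longrightarrow> finite (Fx x)" "\<And>x. x \<in> S \<Longrightarrow> \<delta>x x > 0"
    and close: "\<And>x y. x \<in> S \<Longrightarrow> y \<in> S \<Longrightarrow> (\<forall>i\<in>Fx x. dist (y i) (x i) < \<delta>x x) \<Longrightarrow>
      dist (f y) (f x) < \<epsilon>/2"
    by metis
  define V where "V x = (\<Inter>i\<in>Fx x. (\<lambda>y. y i) -` ball (x i) (\<delta>x x / 2))" for x :: "'i \<Rightarrow> 'a"
  have "open (V x)" if "x \<in> S" for x
    unfolding V_def using Fx[OF that]
    by (intro open_INT ballI open_vimage open_ball continuous_on_product_coordinates) auto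
  moreover have "S \<subseteq> (\<Union>x\<in>S. V x)"
    using Fx(2) by (force simp: V_def)
  ultimately obtain C where C: "C \<subseteq> S" "finite C" "S \<subseteq> (\<Union>x\<in>C. V x)"
    using compactE_image[OF assms(1)] by metis
  define \<delta> where "\<delta> = Min (insert 1 ((\<lambda>x. \<delta>x x / 2) ` C))"
  show thesis
  proof
    show "finite (\<Union>x\<in>C. Fx x)" "\<delta> > 0"
      using C Fx by (auto simp: \<delta>_def)
    fix y z assume y: "y \<in> S" and z: "z \<in> S" and yz: "\<forall>i\<in>(\<Union>x\<in>C. Fx x). dist (y i) (z i) < \<delta>"
    obtain x where x: "x \<in> C" "z \<in> V x"
      using C(3) z by auto
    have zx: "dist (z i) (x i) < \<delta>x x / 2" if "i \<in> Fx x" for i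
      using x(2) that by (auto simp: V_def dist_commute)
    have "\<delta> \<le> \<delta>x x / 2"
      unfolding \<delta>_def using C x by (intro Min_le) auto
    then have "dist (y i) (x i) < \<delta>x x" if "i \<in> Fx x" for i
      using dist_triangle[of "y i" "x i" "z i"] zx[OF that] yz x(1) that by fastforce
    moreover have "dist (z i) (x i) < \<delta>x x" if "i \<in> Fx x" for i
      using zx[OF that] Fx(2)[of x] C x by fastforce
    ultimately have "dist (f y) (f x) < \<epsilon>/2" "dist (f z) (f x) < \<epsilon>/2"
      using close[of x] C x y z by auto
    then show "dist (f y) (f z) < \<epsilon>"
      using dist_triangle2[of "f y" "f z" "f x"] by linarith
  qed
qed

section \<open>Reduction to finitely many coordinates\<close>

lemma compact_polydisc: "compact (polydisc :: ('i \<Rightarrow> complex) set)"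
proof -
  have "polydisc = PiE UNIV (\<lambda>_::'i. cball (0::complex) 1)"
    by (auto simp: polydisc_def PiE_UNIV_domain)
  moreover have "compactin (product_topology (\<lambda>_::'i. euclidean) UNIV) (PiE UNIV (\<lambda>_. cball (0::complex) 1))"
    by (simp add: compactin_PiE)
  ultimately show ?thesis
    unfolding euclidean_product_topology by simp
qed

definition truncated_scaling :: "'i set \<Rightarrow> real \<Rightarrow> ('i \<Rightarrow> complex) \<Rightarrow> 'i \<Rightarrow> complex" where
  "truncated_scaling F r z = (\<lambda>i. if i \<in> F then of_real r * z i else 0)"

lemma truncated_scaling_in_polydisc:
  assumes "z \<in> polydisc" "0 \<le> r" "r \<le> 1"
  shows "truncated_scaling F r z \<in> polydisc"
  using assms by (auto simp: polydisc_def truncated_scaling_def norm_mult intro: mult_le_one)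

lemma continuous_on_polydisc_close_to_truncated_scaling:
  fixes f :: "('i \<Rightarrow> complex) \<Rightarrow> complex"
  assumes "continuous_on polydisc f" "\<epsilon> > 0"
  obtains F r where "finite F" "0 < r" "r < 1"
    "\<And>z. z \<in> polydisc \<Longrightarrow> norm (f z - f (truncated_scaling F r z)) < \<epsilon>"
proof -
  obtain F \<delta> where F: "finite F" and \<delta>: "\<delta> > 0" and uniform:
    "\<And>y z. y \<in> polydisc \<Longrightarrow> z \<in> polydisc \<Longrightarrow> (\<forall>i\<in>F. dist (y i) (z i) < \<delta>) \<Longrightarrow> dist (f y) (f z) < \<epsilon>"
    using compact_uniformly_continuous_finitely_many_coordinates[OF compact_polydisc assms] by metis
  define r where "r = 1 - min \<delta> 1 / 2"
  have r: "0 < r" "r < 1"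
    using \<delta> by (auto simp: r_def)
  show thesis
  proof (rule that[OF F r])
    fix z :: "'i \<Rightarrow> complex" assume z: "z \<in> polydisc"
    have "dist (z i) (truncated_scaling F r z i) < \<delta>" if "i \<in> F" for i
    proof -
      have "z i - truncated_scaling F r z i = of_real (1 - r) * z i"
        using that by (simp add: truncated_scaling_def algebra_simps)
      then have "dist (z i) (truncated_scaling F r z i) = \<bar>1 - r\<bar> * norm (z i)"
        by (simp only: dist_norm norm_mult norm_of_real)
      also have "\<dots> = (1 - r) * norm (z i)"
        using r by simp
      also have "\<dots> \<le> 1 - r"
        using norm_polydisc_le[OF z, of i] r by (simp add: mult_left_le)
      also have "\<dots> < \<delta>"
        using \<delta> by (simp add: r_def)
      finally show ?thesis .
    qed
    then show "norm (f z - f (truncated_scaling F r z)) < \<epsilon>"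
      using uniform[OF z truncated_scaling_in_polydisc[OF z]] r by (simp add: dist_norm)
  qed
qed

lemma depends_only_on_truncated_scaling: "depends_only_on F (\<lambda>z. f (truncated_scaling F r z))"
  unfolding depends_only_on_def truncated_scaling_def by (intro allI impI arg_cong[where f = f] ext) auto

lemma slices_holomorphic_bounded_truncated_scaling:
  fixes f :: "('i \<Rightarrow> complex) \<Rightarrow> complex"
  assumes slices: "\<forall>i. \<forall>z\<in>polydisc. (\<lambda>w. f (z(i := w))) \<in> disc_algebra"
    and bound: "\<And>z. z \<in> polydisc \<Longrightarrow> norm (f z) \<le> M" and r: "0 < r" "r \<le> 1"
  shows "slices_holomorphic_bounded F (1/r) M (\<lambda>z. f (truncated_scaling F r z))"
  unfolding slices_holomorphic_bounded_def
proof (intro ballI conjI)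
  fix i and z :: "'i \<Rightarrow> complex" assume i: "i \<in> F" and z: "z \<in> polydisc"
  define y where "y = truncated_scaling F r z"
  have y: "y \<in> polydisc"
    unfolding y_def using z r by (intro truncated_scaling_in_polydisc) auto
  have upd: "truncated_scaling F r (z(i := w)) = y(i := of_real r * w)" for w
    using i by (auto simp: y_def truncated_scaling_def)
  have scale: "of_real r * w \<in> ball 0 1" if "w \<in> ball 0 (1/r)" for w :: complex
    using that r by (simp add: norm_mult field_simps)
  have "(\<lambda>u. f (y(i := u))) holomorphic_on ball 0 1"
    using slices y by (simp add: disc_algebra_def)
  then have "((\<lambda>u. f (y(i := u))) \<circ> (\<lambda>w. of_real r * w)) holomorphic_on ball 0 (1/r)"
    using scale by (intro holomorphic_on_compose_gen[of _ _ _ "ball 0 1"] holomorphic_intros) auto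
  then show "(\<lambda>w. f (truncated_scaling F r (z(i := w)))) holomorphic_on ball 0 (1/r)"
    by (simp add: upd o_def)
  fix w :: complex assume "w \<in> ball 0 (1/r)"
  then have "norm (of_real r * w) \<le> 1"
    using scale[of w] by simp
  then have "y(i := of_real r * w) \<in> polydisc"
    by (intro polydisc_fun_upd y)
  then show "norm (f (truncated_scaling F r (z(i := w)))) \<le> M"
    using bound by (simp add: upd)
qed

lemma polydisc_approximable_by_poly_funs:
  fixes f :: "('i \<Rightarrow> complex) \<Rightarrow> complex"
  assumes cont: "continuous_on polydisc f"
    and slices: "\<forall>i. \<forall>z\<in>polydisc. (\<lambda>w. f (z(i := w))) \<in> disc_algebra" and "\<epsilon> > 0"
  shows "\<exists>p\<in>poly_funs. \<forall>z\<in>polydisc. norm (f z - p z) < \<epsilon>"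
proof -
  obtain M where M: "\<And>z. z \<in> polydisc \<Longrightarrow> norm (f z) \<le> M"
    using compact_imp_bounded[OF compact_continuous_image[OF cont compact_polydisc]]
    by (auto simp: bounded_iff)
  obtain F r where F: "finite F" and r: "0 < r" "r < 1"
    and close: "\<And>z. z \<in> polydisc \<Longrightarrow> norm (f z - f (truncated_scaling F r z)) < \<epsilon>/2"
    using continuous_on_polydisc_close_to_truncated_scaling[OF cont, of "\<epsilon>/2"] \<open>\<epsilon> > 0\<close> by auto
  obtain p where p: "p \<in> poly_funs"
    and approx: "\<And>z. z \<in> polydisc \<Longrightarrow> norm (f (truncated_scaling F r z) - p z) < \<epsilon>/2"
    using finitely_dependent_approximable_by_poly_funs[OF F _ depends_only_on_truncated_scaling
        slices_holomorphic_bounded_truncated_scaling[OF slices M r(1)], of "\<epsilon>/2"] r \<open>\<epsilon> > 0\<close>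
    by auto
  have "norm (f z - p z) < \<epsilon>" if "z \<in> polydisc" for z
    using norm_triangle_ineq[of "f z - f (truncated_scaling F r z)" "f (truncated_scaling F r z) - p z"]
      close[OF that] approx[OF that] by simp
  then show ?thesis
    using p by blast
qed

lemma continuous_on_uniform_limit_poly_funs:
  assumes "\<forall>n. p n \<in> poly_funs" "uniform_limit polydisc p f sequentially"
  shows "continuous_on polydisc f"
proof (rule uniform_limit_theorem[OF _ assms(2)])
  show "\<forall>\<^sub>F n in sequentially. continuous_on polydisc (p n)"
    using assms(1) by (intro always_eventually allI continuous_on_subset[OF continuous_on_poly_funs]) auto
qed simp

lemma slice_in_disc_algebra_uniform_limit_poly_funs:
  assumes "\<forall>n. p n \<in> poly_funs" "uniform_limit polydisc p f sequentially" "z \<in> polydisc"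
  shows "(\<lambda>w. f (z(i := w))) \<in> disc_algebra"
proof -
  have "\<forall>\<^sub>F n in sequentially. continuous_on (cball 0 1) (\<lambda>w. p n (z(i := w))) \<and>
      (\<lambda>w. p n (z(i := w))) holomorphic_on ball 0 1"
  proof (intro always_eventually allI conjI)
    fix n
    have entire: "(\<lambda>w. p n (z(i := w))) holomorphic_on UNIV"
      using assms(1) by (intro holomorphic_poly_funs_slice) auto
    show "continuous_on (cball 0 1) (\<lambda>w. p n (z(i := w)))"
      using holomorphic_on_imp_continuous_on[OF entire] by (rule continuous_on_subset) simp
    show "(\<lambda>w. p n (z(i := w))) holomorphic_on ball 0 1"
      using entire by (rule holomorphic_on_subset) simp
  qed
  moreover have "uniform_limit (cball 0 1) (\<lambda>n w. p n (z(i := w))) (\<lambda>w. f (z(i := w))) sequentially"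
    using assms(3) by (intro uniform_limit_compose'[OF assms(2)]) (auto intro: polydisc_fun_upd)
  ultimately obtain "continuous_on (cball 0 1) (\<lambda>w. f (z(i := w)))" "(\<lambda>w. f (z(i := w))) holomorphic_on ball 0 1"
    by (rule holomorphic_uniform_limit) simp
  then show ?thesis
    by (simp add: disc_algebra_def)
qed

lemma uniform_limit_of_approximable:
  fixes f :: "'a \<Rightarrow> 'b::real_normed_vector"
  assumes "\<And>\<epsilon>. \<epsilon> > 0 \<Longrightarrow> \<exists>p\<in>P. \<forall>z\<in>S. norm (f z - p z) < \<epsilon>"
  shows "\<exists>p. (\<forall>n. p n \<in> P) \<and> uniform_limit S p f sequentially"
proof -
  have "\<forall>n. \<exists>q\<in>P. \<forall>z\<in>S. norm (f z - q z) < inverse (Suc n)"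
    using assms by simp
  then obtain p where p: "\<And>n. p n \<in> P" and close: "\<And>n z. z \<in> S \<Longrightarrow> norm (f z - p n z) < inverse (Suc n)"
    by metis
  have "uniform_limit S p f sequentially"
  proof (rule uniform_limitI)
    fix \<epsilon> :: real assume "\<epsilon> > 0"
    then obtain N where N: "inverse (Suc N) < \<epsilon>"
      using reals_Archimedean by blast
    have "dist (p n z) (f z) < \<epsilon>" if "N \<le> n" "z \<in> S" for n z
    proof -
      have "inverse (real (Suc n)) \<le> inverse (Suc N)"
        using that(1) by (simp add: le_imp_inverse_le)
      then have "norm (f z - p n z) < \<epsilon>"
        using close[OF that(2), of n] N by linarith
      then show ?thesis
        by (simp add: dist_norm norm_minus_commute)
    qed
    then show "\<forall>\<^sub>F n in sequentially. \<forall>z\<in>S. dist (p n z) (f z) < \<epsilon>"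
      unfolding eventually_sequentially by blast
  qed
  with p show ?thesis
    by blast
qed

theorem proposition3p1:
  fixes f :: "('i \<Rightarrow> complex) \<Rightarrow> complex"
  shows "(\<exists>p :: nat \<Rightarrow> ('i \<Rightarrow> complex) \<Rightarrow> complex.
            (\<forall>n. p n \<in> poly_funs) \<and> uniform_limit polydisc p f sequentially)
     \<longleftrightarrow> (continuous_on polydisc f \<and>
          (\<forall>i0. \<forall>z\<in>polydisc. (\<lambda>w. f (z(i0 := w))) \<in> disc_algebra))"
proof
  assume "\<exists>p. (\<forall>n. p n \<in> poly_funs) \<and> uniform_limit polydisc p f sequentially"
  then obtain p where p: "\<forall>n. p n \<in> poly_funs" "uniform_limit polydisc p f sequentially"
    by blast
  show "continuous_on polydisc f \<and> (\<forall>i0. \<forall>z\<in>polydisc. (\<lambda>w. f (z(i0 := w))) \<in> disc_algebra)"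
    using continuous_on_uniform_limit_poly_funs[OF p] slice_in_disc_algebra_uniform_limit_poly_funs[OF p]
    by blast
next
  assume conditions: "continuous_on polydisc f \<and> (\<forall>i0. \<forall>z\<in>polydisc. (\<lambda>w. f (z(i0 := w))) \<in> disc_algebra)"
  have "\<exists>p\<in>poly_funs. \<forall>z\<in>polydisc. norm (f z - p z) < \<epsilon>" if "\<epsilon> > 0" for \<epsilon>
    using polydisc_approximable_by_poly_funs[OF conditions[THEN conjunct1] conditions[THEN conjunct2] that] .
  then show "\<exists>p. (\<forall>n. p n \<in> poly_funs) \<and> uniform_limit polydisc p f sequentially"
    by (rule uniform_limit_of_approximable)
qed

end
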